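(* Let $f:[0,1]\to\mathbb{R}$ be a $C^2$ function such that $f'(0)\ge 0$, $\inf_{[0,1]}f''>0$, $f'''$ exists and is bounded on $(0,1)$, and $f'f'''-(f'')^2\le0$ on $(0,1)$. Let $x_0\in[0,1]$, let $0<\tilde a\le a$, and suppose $(u,v)\in\mathbb{R}^2$ with $x_0-u\in[0,1]$ solves $$a f(x_0-u)+v=\tilde a f(x_0),\qquad a f'(x_0-u)=\tilde a f'(x_0).$$ Then $a f(x-u)+v\ge \tilde a f(x)$ for every $x$ with $x\in[0,1]$ and $x-u\in[0,1]$. *)

theory Defs
  imports "HOL-Analysis.Analysis"
begin

end

theory Submission
  imports Defs
begin

text \<open>
  Since \<open>f'' > 0\<close> and \<open>f'(0) \<ge> 0\<close>, \<open>f'\<close> is increasing and positive on \<open>(0,1]\<close>, and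
  \<open>f' f''' \<le> f''\<^sup>2\<close> says that \<open>f'/f''\<close> is nondecreasing, i.e. \<open>f'\<close> is log-concave. Hence for
  \<open>u \<ge> 0\<close> the ratio \<open>f'(t - u) / f'(t)\<close> is nondecreasing in \<open>t\<close>. The difference
  \<open>g x = a f(x - u) + v - a' f x\<close> has derivative \<open>f' x (a f'(x - u) / f' x - a')\<close>, and the
  tangency conditions say that \<open>g\<close> and the bracket vanish at \<open>x\<^sub>0\<close>. So \<open>g\<close> decreases
  before \<open>x\<^sub>0\<close> and increases after it, whence \<open>g \<ge> 0\<close>. That \<open>u \<ge> 0\<close> follows from
  \<open>a' \<le> a\<close> and the monotonicity of \<open>f'\<close>.
\<close>

lemma quotient_mono_if_wronskian_nonneg:
  fixes p q p' q' :: "real \<Rightarrow> real"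
  assumes "y \<le> z"
    and p_cont: "continuous_on {y..z} p" and q_cont: "continuous_on {y..z} q"
    and q_nz: "\<And>t. t \<in> {y..z} \<Longrightarrow> q t \<noteq> 0"
    and p_deriv: "\<And>t. y < t \<Longrightarrow> t < z \<Longrightarrow> (p has_real_derivative p' t) (at t)"
    and q_deriv: "\<And>t. y < t \<Longrightarrow> t < z \<Longrightarrow> (q has_real_derivative q' t) (at t)"
    and wronskian: "\<And>t. y < t \<Longrightarrow> t < z \<Longrightarrow> p t * q' t \<le> p' t * q t"
  shows "p y / q y \<le> p z / q z"
proof (rule DERIV_nonneg_imp_increasing_open[OF \<open>y \<le> z\<close>])
  fix t assume t: "y < t" "t < z"
  then have "q t \<noteq> 0" using q_nz by simp
  then have "((\<lambda>t. p t / q t) has_real_derivative (p' t * q t - q' t * p t) / (q t)\<^sup>2) (at t)"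
    using DERIV_quotient[OF p_deriv[OF t] q_deriv[OF t]] by (simp add: power2_eq_square)
  moreover have "0 \<le> (p' t * q t - q' t * p t) / (q t)\<^sup>2"
    using wronskian[OF t] by (simp add: mult.commute)
  ultimately show "\<exists>d. ((\<lambda>t. p t / q t) has_real_derivative d) (at t) \<and> 0 \<le> d"
    by blast
qed (use p_cont q_cont q_nz in \<open>intro continuous_on_divide; auto\<close>)

lemma min_at_derivative_sign_change:
  fixes g g' :: "real \<Rightarrow> real"
  assumes g_cont: "continuous_on {lo..hi} g"
    and x0: "x0 \<in> {lo..hi}" and x: "x \<in> {lo..hi}"
    and g_deriv: "\<And>t. lo < t \<Longrightarrow> t < hi \<Longrightarrow> (g has_real_derivative g' t) (at t)"
    and decreasing: "\<And>t. lo < t \<Longrightarrow> t < x0 \<Longrightarrow> g' t \<le> 0"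
    and increasing: "\<And>t. x0 < t \<Longrightarrow> t < hi \<Longrightarrow> 0 \<le> g' t"
  shows "g x0 \<le> g x"
proof (cases "x0 \<le> x")
  case True
  show ?thesis
  proof (rule DERIV_nonneg_imp_increasing_open[OF True])
    show "\<exists>d. (g has_real_derivative d) (at t) \<and> 0 \<le> d" if "x0 < t" "t < x" for t
      using that x0 x g_deriv increasing by (metis atLeastAtMost_iff le_less_trans less_le_trans)
    show "continuous_on {x0..x} g"
      using x0 x by (intro continuous_on_subset[OF g_cont]) auto
  qed
next
  case False
  then have "x \<le> x0" by simp
  then show ?thesis
  proof (rule DERIV_nonpos_imp_decreasing_open)
    show "\<exists>d. (g has_real_derivative d) (at t) \<and> d \<le> 0" if "x < t" "t < x0" for t
      using that x0 x g_deriv decreasing by (metis atLeastAtMost_iff le_less_trans less_le_trans)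
    show "continuous_on {x..x0} g"
      using x0 x by (intro continuous_on_subset[OF g_cont]) auto
  qed
qed

locale increasing_log_concave =
  fixes f1 f2 f3 :: "real \<Rightarrow> real"
  assumes f1_deriv: "\<And>x. x \<in> {0..1} \<Longrightarrow> (f1 has_real_derivative f2 x) (at x within {0..1})"
    and f2_cont: "continuous_on {0..1} f2"
    and f2_deriv: "\<And>x. x \<in> {0<..<1} \<Longrightarrow> (f2 has_real_derivative f3 x) (at x)"
    and f2_pos: "\<And>x. x \<in> {0..1} \<Longrightarrow> 0 < f2 x"
    and f1_0_nonneg: "0 \<le> f1 0"
    and log_concave: "\<And>x. x \<in> {0<..<1} \<Longrightarrow> f1 x * f3 x \<le> (f2 x)\<^sup>2"
begin

lemma f1_cont: "continuous_on {0..1} f1"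
  using f1_deriv DERIV_continuous continuous_on_eq_continuous_within by blast

lemma f1_deriv_at: "0 < x \<Longrightarrow> x < 1 \<Longrightarrow> (f1 has_real_derivative f2 x) (at x)"
  using f1_deriv[of x] at_within_Icc_at[of 0 x 1] by simp

lemma f1_less:
  assumes "0 \<le> y" "y < z" "z \<le> 1"
  shows "f1 y < f1 z"
proof (rule DERIV_pos_imp_increasing_open[OF \<open>y < z\<close>])
  show "\<exists>d. (f1 has_real_derivative d) (at t) \<and> 0 < d" if "y < t" "t < z" for t
    using f1_deriv_at[of t] f2_pos[of t] that assms by auto
  show "continuous_on {y..z} f1"
    using assms by (intro continuous_on_subset[OF f1_cont]) auto
qed

lemma f1_pos: "0 < x \<Longrightarrow> x \<le> 1 \<Longrightarrow> 0 < f1 x"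
  using f1_less[of 0 x] f1_0_nonneg by simp

lemma f1_nonneg: "x \<in> {0..1} \<Longrightarrow> 0 \<le> f1 x"
  using f1_pos[of x] f1_0_nonneg by (cases "x = 0") auto

lemma f1_div_f2_mono:
  assumes "0 \<le> y" "y \<le> z" "z \<le> 1"
  shows "f1 y / f2 y \<le> f1 z / f2 z"
proof (rule quotient_mono_if_wronskian_nonneg[where p = f1 and q = f2 and p' = f2 and q' = f3])
  show "f2 t \<noteq> 0" if "t \<in> {y..z}" for t
    using f2_pos[of t] that assms by simp
qed (use assms f1_cont f2_cont f1_deriv_at f2_deriv log_concave
    in \<open>auto elim: continuous_on_subset simp: power2_eq_square\<close>)

lemma shifted_ratio_mono:
  assumes "0 \<le> u" "u \<le> y" "y \<le> z" "z \<le> 1"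
  shows "f1 (y - u) * f1 z \<le> f1 (z - u) * f1 y"
proof (cases "u = 0")
  case True
  then show ?thesis by (simp add: mult.commute)
next
  case False
  with assms have pos: "0 < f1 y" "0 < f1 z" using f1_pos by auto
  have shifted_deriv: "((\<lambda>t. f1 (t - u)) has_real_derivative f2 (t - u)) (at t)"
    if "u < t" "t < 1 + u" for t
    using f1_deriv_at[of "t - u"] DERIV_shift[of f1 _ t "- u"] that by simp
  have "f1 (y - u) / f1 y \<le> f1 (z - u) / f1 z"
  proof (rule quotient_mono_if_wronskian_nonneg[where p = "\<lambda>t. f1 (t - u)" and q = f1
        and p' = "\<lambda>t. f2 (t - u)" and q' = f2])
    show "continuous_on {y..z} (\<lambda>t. f1 (t - u))"
      by (rule continuous_on_compose2[OF f1_cont]) (use assms in \<open>auto intro!: continuous_intros\<close>)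
    show "f1 (t - u) * f2 t \<le> f2 (t - u) * f1 t" if "y < t" "t < z" for t
    proof -
      have "f1 (t - u) / f2 (t - u) \<le> f1 t / f2 t"
        using f1_div_f2_mono[of "t - u" t] that assms by simp
      moreover have "0 < f2 t" "0 < f2 (t - u)" using f2_pos that assms by auto
      ultimately show ?thesis by (simp add: field_simps)
    qed
    show "f1 t \<noteq> 0" if "t \<in> {y..z}" for t
      using f1_pos[of t] that assms False by simp
  qed (use assms False f1_cont f1_pos f1_deriv_at shifted_deriv
      in \<open>auto elim: continuous_on_subset\<close>)
  then show ?thesis using pos by (simp add: field_simps)
qed

context
  fixes a a' x0 u :: real
  assumes a: "0 < a'" "a' \<le> a"
    and x0: "x0 \<in> {0..1}" and x0_shift: "x0 - u \<in> {0..1}"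
    and tangent: "a * f1 (x0 - u) = a' * f1 x0"
begin

lemma tangent_shift_nonneg: "0 \<le> u"
proof (rule ccontr)
  assume "\<not> 0 \<le> u"
  then have "f1 x0 < f1 (x0 - u)" using f1_less x0 x0_shift by simp
  moreover have "a' * f1 x0 \<le> a * f1 x0" using a f1_nonneg x0 by (simp add: mult_right_mono)
  ultimately show False using tangent a by (smt (verit) mult_strict_left_mono)
qed

lemma tangent_slope_le_right:
  assumes "x0 \<le> t" "t \<le> 1"
  shows "a' * f1 t \<le> a * f1 (t - u)"
proof (cases "f1 x0 = 0")
  case True
  then have "u = 0" using f1_pos[of x0] tangent_shift_nonneg x0 x0_shift by force
  then show ?thesis using a f1_nonneg[of t] assms x0 by (simp add: mult_right_mono)
next
  case False
  then have "0 < f1 x0" using f1_nonneg x0 by (simp add: less_le)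
  have "a' * f1 t * f1 x0 = a * f1 (x0 - u) * f1 t"
    using tangent by (metis mult.commute mult.assoc)
  also have "\<dots> \<le> a * f1 (t - u) * f1 x0"
    using mult_left_mono[OF shifted_ratio_mono[of u x0 t]] tangent_shift_nonneg assms x0_shift a
    by (simp add: mult.assoc)
  finally show ?thesis using \<open>0 < f1 x0\<close> by simp
qed

lemma tangent_slope_le_left:
  assumes "0 < t" "t \<le> x0" "0 \<le> t - u"
  shows "a * f1 (t - u) \<le> a' * f1 t"
proof -
  have "0 < f1 x0" using f1_pos assms x0 by simp
  have "a * f1 (t - u) * f1 x0 \<le> a * f1 (x0 - u) * f1 t"
    using mult_left_mono[OF shifted_ratio_mono[of u t x0]] tangent_shift_nonneg assms x0 a
    by (simp add: mult.assoc)
  also have "\<dots> = a' * f1 t * f1 x0"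
    using tangent by (metis mult.commute mult.assoc)
  finally show ?thesis using \<open>0 < f1 x0\<close> by simp
qed

lemma shifted_tangent_above:
  fixes f :: "real \<Rightarrow> real"
  assumes f_deriv: "\<And>x. x \<in> {0..1} \<Longrightarrow> (f has_real_derivative f1 x) (at x within {0..1})"
    and tangent_value: "a * f (x0 - u) + v = a' * f x0"
    and x: "x \<in> {u..1}"
  shows "a' * f x \<le> a * f (x - u) + v"
proof -
  have u: "0 \<le> u" by (rule tangent_shift_nonneg)
  have f_cont: "continuous_on {0..1} f"
    using f_deriv DERIV_continuous continuous_on_eq_continuous_within by blast
  have f_deriv_at: "(f has_real_derivative f1 x) (at x)" if "0 < x" "x < 1" for x
    using f_deriv[of x] that at_within_Icc_at[of 0 x 1] by simp
  define g where "g x = a * f (x - u) + v - a' * f x" for x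
  have "continuous_on {u..1} (\<lambda>x. f (x - u))"
    by (rule continuous_on_compose2[OF f_cont]) (use u in \<open>auto intro!: continuous_intros\<close>)
  moreover have "continuous_on {u..1} f"
    using u by (intro continuous_on_subset[OF f_cont]) auto
  ultimately have g_cont: "continuous_on {u..1} g"
    unfolding g_def by (intro continuous_intros)
  have g_deriv: "(g has_real_derivative a * f1 (t - u) - a' * f1 t) (at t)" if "u < t" "t < 1" for t
  proof -
    have "((\<lambda>x. f (x - u)) has_real_derivative f1 (t - u)) (at t)"
      using f_deriv_at[of "t - u"] DERIV_shift[of f _ t "- u"] that u by simp
    then show ?thesis
      unfolding g_def using f_deriv_at that u by (auto intro!: derivative_eq_intros)
  qed
  have "g x0 \<le> g x"
  proof (rule min_at_derivative_sign_change[OF g_cont _ x g_deriv])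
    show "x0 \<in> {u..1}" using x0 x0_shift by simp
    show "a * f1 (t - u) - a' * f1 t \<le> 0" if "u < t" "t < x0" for t
      using tangent_slope_le_left[of t] that u by simp
    show "0 \<le> a * f1 (t - u) - a' * f1 t" if "x0 < t" "t < 1" for t
      using tangent_slope_le_right[of t] that by simp
  qed
  moreover have "g x0 = 0" using tangent_value by (simp add: g_def)
  ultimately show ?thesis by (simp add: g_def)
qed

end

end

theorem lemma2p1:
  fixes f f1 f2 f3 :: "real \<Rightarrow> real"
    and x0 a a' u v :: real
  assumes d1: "\<forall>x\<in>{0..1}. (f has_real_derivative f1 x) (at x within {0..1})"
    and d2: "\<forall>x\<in>{0..1}. (f1 has_real_derivative f2 x) (at x within {0..1})"
    and c2: "continuous_on {0..1} f2"
    and d3: "\<forall>x\<in>{0<..<1}. (f2 has_real_derivative f3 x) (at x)"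
    and b3: "bounded (f3 ` {0<..<1})"
    and f1_0: "f1 0 \<ge> 0"
    and inf_pos: "(INF x\<in>{0..1}. f2 x) > 0"
    and ineq: "\<forall>x\<in>{0<..<1}. f1 x * f3 x - (f2 x)^2 \<le> 0"
    and x0: "x0 \<in> {0..1}"
    and a: "0 < a'" "a' \<le> a"
    and xu: "x0 - u \<in> {0..1}"
    and eq1: "a * f (x0 - u) + v = a' * f x0"
    and eq2: "a * f1 (x0 - u) = a' * f1 x0"
  shows "\<forall>x. x \<in> {0..1} \<and> x - u \<in> {0..1} \<longrightarrow> a * f (x - u) + v \<ge> a' * f x"
proof -
  have "bdd_below (f2 ` {0..1})"
    by (intro bounded_imp_bdd_below compact_imp_bounded compact_continuous_image c2) simp
  then have "0 < f2 x" if "x \<in> {0..1}" for x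
    using cINF_lower[OF _ that, of f2] inf_pos by linarith
  then interpret increasing_log_concave f1 f2 f3
    using d2 c2 d3 f1_0 ineq by unfold_locales auto
  have "a' * f x \<le> a * f (x - u) + v" if "x \<in> {0..1}" "x - u \<in> {0..1}" for x
    using shifted_tangent_above[OF a x0 xu eq2 _ eq1] d1 that by simp
  then show ?thesis by simp
qed

end
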